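(* Let $G_0,G_1\in\mathbb{Z}$, let $(G_n)_{n\ge0}$ satisfy $G_n=G_{n-1}+G_{n-2}$ for $n\ge2$, and let $\mu = G_1^2 - G_0 G_1 - G_0^2$. For every odd integer $k \geq 1$, $\mathcal{G}^2_{G_0,G_1}(k)$ divides $|2\mu|$.
   Context: $\mathcal{G}^2_{G_0,G_1}(k)=\gcd\{\sum_{i=1}^k G_{n+i}^2 : n\ge 0\}$ (nonnegative gcd of this infinite set of integers). *)

theory Defs
  imports Main
begin

fun gfib :: "int \<Rightarrow> int \<Rightarrow> nat \<Rightarrow> int" where
  "gfib a b 0 = a"
| "gfib a b (Suc 0) = b"
| "gfib a b (Suc (Suc n)) = gfib a b (Suc n) + gfib a b n"

definition gsq_gcd :: "int \<Rightarrow> int \<Rightarrow> nat \<Rightarrow> int" where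
  "gsq_gcd a b k = Gcd {(\<Sum>i=1..k. (gfib a b (n + i))^2) | n. True}"

end

theory Submission
  imports Defs
begin

text \<open>The Cassini-type identity
  \<open>G(n+1)^2 - G(n) G(n+1) - G(n)^2 = (-1)^n \<mu>\<close> gives
  \<open>G(n+2)^2 - 3 G(n+1)^2 + G(n)^2 = -2 (-1)^n \<mu>\<close>. Hence, for the sums \<open>S(n)\<close> of \<open>k\<close>
  consecutive squares, \<open>S(n+2) - 3 S(n+1) + S(n)\<close> is an alternating sum of \<open>k\<close> copies
  of \<open>2\<mu>\<close>, i.e. \<open>\<plusminus>2\<mu>\<close> when \<open>k\<close> is odd; and the gcd of all \<open>S(n)\<close> divides this
  integer combination of three of them.\<close>

lemma gfib_cassini:
  "(gfib a b (Suc n))\<^sup>2 - gfib a b n * gfib a b (Suc n) - (gfib a b n)\<^sup>2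
     = (-1)^n * (b\<^sup>2 - a * b - a\<^sup>2)"
proof (induction n)
  case 0
  then show ?case by simp
next
  case (Suc n)
  have "(gfib a b (Suc (Suc n)))\<^sup>2 - gfib a b (Suc n) * gfib a b (Suc (Suc n))
          - (gfib a b (Suc n))\<^sup>2
      = - ((gfib a b (Suc n))\<^sup>2 - gfib a b n * gfib a b (Suc n) - (gfib a b n)\<^sup>2)"
    by (simp add: power2_eq_square algebra_simps)
  with Suc.IH show ?case by simp
qed

lemma gfib_square_recurrence:
  "(gfib a b (n + 2))\<^sup>2 - 3 * (gfib a b (n + 1))\<^sup>2 + (gfib a b n)\<^sup>2
     = - 2 * (-1)^n * (b\<^sup>2 - a * b - a\<^sup>2)"
proof -
  have "(gfib a b (n + 2))\<^sup>2 - 3 * (gfib a b (n + 1))\<^sup>2 + (gfib a b n)\<^sup>2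
      = - 2 * ((gfib a b (Suc n))\<^sup>2 - gfib a b n * gfib a b (Suc n) - (gfib a b n)\<^sup>2)"
    by (simp add: numeral_2_eq_2 power2_eq_square algebra_simps)
  then show ?thesis by (simp add: gfib_cassini)
qed

lemma sum_alternating_signs:
  "(\<Sum>i=1..k. (-1::'a::ring_1) ^ i) = (if odd k then -1 else 0)"
  by (induction k) auto

definition gfib_square_window :: "int \<Rightarrow> int \<Rightarrow> nat \<Rightarrow> nat \<Rightarrow> int" where
  "gfib_square_window a b k n = (\<Sum>i=1..k. (gfib a b (n + i))\<^sup>2)"

lemma gsq_gcd_dvd_window: "gsq_gcd a b k dvd gfib_square_window a b k n"
  unfolding gsq_gcd_def gfib_square_window_def by (rule Gcd_dvd) blast

lemma gfib_square_window_recurrence: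
  assumes "odd k"
  shows "gfib_square_window a b k (n + 2) - 3 * gfib_square_window a b k (n + 1)
           + gfib_square_window a b k n
         = 2 * (-1)^n * (b\<^sup>2 - a * b - a\<^sup>2)"
proof -
  let ?\<mu> = "b\<^sup>2 - a * b - a\<^sup>2"
  have "gfib_square_window a b k (n + 2) - 3 * gfib_square_window a b k (n + 1)
          + gfib_square_window a b k n
      = (\<Sum>i=1..k. (gfib a b (n + i + 2))\<^sup>2 - 3 * (gfib a b (n + i + 1))\<^sup>2
                    + (gfib a b (n + i))\<^sup>2)"
    unfolding gfib_square_window_def
    by (simp add: sum.distrib sum_subtractf sum_distrib_left ac_simps)
  also have "\<dots> = (\<Sum>i=1..k. - 2 * (-1)^n * ?\<mu> * (-1)^i)"
  proof (rule sum.cong)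
    fix i
    show "(gfib a b (n + i + 2))\<^sup>2 - 3 * (gfib a b (n + i + 1))\<^sup>2 + (gfib a b (n + i))\<^sup>2
        = - 2 * (-1)^n * ?\<mu> * (-1)^i"
      using gfib_square_recurrence[of a b "n + i"] by (simp add: power_add)
  qed simp
  also have "\<dots> = - 2 * (-1)^n * ?\<mu> * (\<Sum>i=1..k. (-1)^i)"
    by (simp add: sum_distrib_left)
  also have "\<dots> = 2 * (-1)^n * ?\<mu>"
    unfolding sum_alternating_signs using assms by simp
  finally show ?thesis .
qed

theorem theorem4p8:
  fixes G0 G1 :: int and k :: nat
  assumes "odd k" and "k \<ge> 1"
  shows "gsq_gcd G0 G1 k dvd \<bar>2 * (G1^2 - G0 * G1 - G0^2)\<bar>"
proof -
  let ?S = "gfib_square_window G0 G1 k"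
  have "gsq_gcd G0 G1 k dvd ?S (0 + 2) - 3 * ?S (0 + 1) + ?S 0"
    by (intro dvd_add dvd_diff dvd_mult gsq_gcd_dvd_window)
  also have "?S (0 + 2) - 3 * ?S (0 + 1) + ?S 0 = 2 * (G1^2 - G0 * G1 - G0^2)"
    using gfib_square_window_recurrence[OF \<open>odd k\<close>, of G0 G1 0] by simp
  finally show ?thesis by simp
qed

end
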